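(* Let $(G,\boldsymbol{\gamma})$ be a reflection-$(2,2)$ graph with symmetric lift $(\tilde G,\varphi)$. Then for a generic assignment of directions $\vec d$, the reflection direction network $(\tilde G,\varphi,\vec d)$ has only collapsed realizations.
   Context: A colored graph $(G,\boldsymbol{\gamma})$ is a finite directed multigraph $G$ (self-loops and parallel edges allowed) with a color $\gamma_{ij}\in\mathbb{Z}/2\mathbb{Z}$ on each edge. $\rho:H_1(G,\mathbb{Z})\to\mathbb{Z}/2\mathbb{Z}$ sends a cycle to the sum of its edge colors; the $\rho$-image of a subgraph is the image of its cycles, trivial if $\{0\}$. For a subgraph $G'$: $n',m'$ are its numbers of vertices and edges, $c'$ (resp. $c'_0$) the number of its connected components with non-trivial (resp. trivial) $\rho$-image. $(G,\boldsymbol{\gamma})$ with $n$ vertices and $m$ edges is a reflection-$(2,2)$ graph if $m=2n-1$ and every subgraph satisfies $m'\le 2n'-c'-2c'_0$. The lift $(\tilde G,\varphi)$ has vertices $\tilde i_\gamma$ ($i\in V(G),\gamma\in\mathbb{Z}/2\mathbb{Z}$), edges $\tilde i_\gamma\tilde j_{\gamma+\gamma_{ij}}$ for each edge $ij$, and $\varphi(\tilde i_\gamma)=\tilde i_{\gamma+1}$. Let $\Phi(1)$ be the reflection $(x,y)\mapsto(-x,y)$ and $\Phi(0)$ the identity. A reflection direction network $(\tilde G,\varphi,\vec d)$ assigns a vector $\vec d_{ij}\in\mathbb{R}^2$ to each edge $ij$ of $G$; its realizations are point sets $\vec p_{\tilde i_\gamma}=\Phi(\gamma)\vec p_i$ determined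 by points $\vec p_i\in\mathbb{R}^2$ ($i\in V(G)$) satisfying $\langle\Phi(\gamma_{ij})\vec p_j-\vec p_i,\vec d_{ij}^\perp\rangle=0$ for all edges $ij$ of $G$, $\vec d^\perp$ denoting rotation by $\pi/2$. A realization is collapsed if all vertices of $\tilde G$ are at the same point. A property holds for generic directions if it holds for all $\vec d\in\mathbb{R}^{2m}$ outside a proper algebraic subset. *)

theory Defs
  imports "HOL-Analysis.Analysis"
begin

text \<open>A colored graph: finite vertex type 'v, finite edge type 'e (multigraph, loops allowed),
  each edge e directed from src e to tgt e, with color gam e :: bool (True = 1 in Z/2Z).\<close>

fun walk :: "('e \<Rightarrow> 'v) \<Rightarrow> ('e \<Rightarrow> 'v) \<Rightarrow> 'e set \<Rightarrow> 'v \<Rightarrow> 'e list \<Rightarrow> 'v \<Rightarrow> bool" where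
  "walk src tgt F u [] v = (u = v)"
| "walk src tgt F u (e # es) v =
     (e \<in> F \<and> ((src e = u \<and> walk src tgt F (tgt e) es v) \<or> (tgt e = u \<and> walk src tgt F (src e) es v)))"

definition rho_walk :: "('e \<Rightarrow> bool) \<Rightarrow> 'e list \<Rightarrow> bool" where
  "rho_walk gam es = odd (length (filter gam es))"

definition is_subgraph :: "('e \<Rightarrow> 'v) \<Rightarrow> ('e \<Rightarrow> 'v) \<Rightarrow> 'v set \<Rightarrow> 'e set \<Rightarrow> bool" where
  "is_subgraph src tgt W F = (\<forall>e\<in>F. src e \<in> W \<and> tgt e \<in> W)"

definition component :: "('e \<Rightarrow> 'v) \<Rightarrow> ('e \<Rightarrow> 'v) \<Rightarrow> 'v set \<Rightarrow> 'e set \<Rightarrow> 'v \<Rightarrow> 'v set" where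
  "component src tgt W F u = {v \<in> W. \<exists>es. walk src tgt F u es v}"

definition components :: "('e \<Rightarrow> 'v) \<Rightarrow> ('e \<Rightarrow> 'v) \<Rightarrow> 'v set \<Rightarrow> 'e set \<Rightarrow> 'v set set" where
  "components src tgt W F = component src tgt W F ` W"

text \<open>A component C has trivial rho-image iff every cycle in it (equivalently every closed walk,
  since closed walks generate H_1) has rho-value 0.\<close>
definition trivial_rho :: "('e \<Rightarrow> 'v) \<Rightarrow> ('e \<Rightarrow> 'v) \<Rightarrow> ('e \<Rightarrow> bool) \<Rightarrow> 'e set \<Rightarrow> 'v set \<Rightarrow> bool" where
  "trivial_rho src tgt gam F C = (\<forall>u\<in>C. \<forall>es. walk src tgt F u es u \<longrightarrow> \<not> rho_walk gam es)"

definition reflection_22_graph ::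
  "('e::finite \<Rightarrow> 'v::finite) \<Rightarrow> ('e \<Rightarrow> 'v) \<Rightarrow> ('e \<Rightarrow> bool) \<Rightarrow> bool" where
  "reflection_22_graph src tgt gam =
     (card (UNIV :: 'e set) + 1 = 2 * card (UNIV :: 'v set) \<and>
      (\<forall>W F. is_subgraph src tgt W F \<longrightarrow>
         (let cs = components src tgt W F;
              c = card {C \<in> cs. \<not> trivial_rho src tgt gam F C};
              c0 = card {C \<in> cs. trivial_rho src tgt gam F C}
          in int (card F) \<le> 2 * int (card W) - int c - 2 * int c0)))"

definition Phi :: "bool \<Rightarrow> real \<times> real \<Rightarrow> real \<times> real" where
  "Phi g p = (if g then (- fst p, snd p) else p)"

definition perp :: "real \<times> real \<Rightarrow> real \<times> real" where
  "perp d = (- snd d, fst d)"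

text \<open>Realization of the reflection direction network with directions d: points p_i for
  vertices of G; the lift vertex (i, g) is placed at Phi g (p i).\<close>
definition is_realization ::
  "('e \<Rightarrow> 'v) \<Rightarrow> ('e \<Rightarrow> 'v) \<Rightarrow> ('e \<Rightarrow> bool) \<Rightarrow> ('e \<Rightarrow> real \<times> real) \<Rightarrow> ('v \<Rightarrow> real \<times> real) \<Rightarrow> bool" where
  "is_realization src tgt gam d p =
     (\<forall>e. (Phi (gam e) (p (tgt e)) - p (src e)) \<bullet> perp (d e) = 0)"

definition lift_placement :: "('v \<Rightarrow> real \<times> real) \<Rightarrow> 'v \<times> bool \<Rightarrow> real \<times> real" where
  "lift_placement p = (\<lambda>(i, g). Phi g (p i))"

definition collapsed :: "('v \<Rightarrow> real \<times> real) \<Rightarrow> bool" where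
  "collapsed p = (\<forall>a b. lift_placement p a = lift_placement p b)"

inductive poly_fun :: "(('e \<Rightarrow> real \<times> real) \<Rightarrow> real) \<Rightarrow> bool" where
  const: "poly_fun (\<lambda>d. c)"
| coord1: "poly_fun (\<lambda>d. fst (d e))"
| coord2: "poly_fun (\<lambda>d. snd (d e))"
| add: "poly_fun f \<Longrightarrow> poly_fun g \<Longrightarrow> poly_fun (\<lambda>d. f d + g d)"
| mult: "poly_fun f \<Longrightarrow> poly_fun g \<Longrightarrow> poly_fun (\<lambda>d. f d * g d)"

text \<open>P holds for generic directions: outside a proper algebraic subset of R^(2m), i.e.
  outside the zero set of some not-identically-zero polynomial.\<close>
definition generic :: "(('e::finite \<Rightarrow> real \<times> real) \<Rightarrow> bool) \<Rightarrow> bool" where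
  "generic P = (\<exists>f. poly_fun f \<and> (\<exists>d. f d \<noteq> 0) \<and> (\<forall>d. f d \<noteq> 0 \<longrightarrow> P d))"

end

theory Submission
  imports Defs
begin

text \<open>
  Write p_i = (x_i, y_i). The constraint of an edge ij with direction (a, b) reads
  a (y_j - y_i) + b (x_i - s x_j) = 0, where s = +1 or -1 according to the colour of ij, so it is
  a linear form a Y_ij + b X_ij in the 2n coordinates. Vertical translations satisfy every
  constraint; adding one equation y_v = 0 that rules them out gives m + 1 = 2n equations, whose
  determinant is a polynomial in the directions, and wherever it does not vanish all
  realizations are collapsed.

  The determinant is not identically zero by Rado's theorem on independent transversals: for
  every edge set F the vectors X_e, Y_e (e in F) span at least |F| dimensions: a vector
  orthogonal to all of them is determined by one y-value per component of F and one x-value per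
  component with trivial rho-image, a space of dimension c' + 2 c'_0, and the sparsity count
  is m' <= 2n - c' - 2 c'_0. So one of X_e, Y_e can
  be chosen for each edge with all choices independent, and the directions (0, 1) resp.
  (1, 0) selecting them make the system invertible.
\<close>

section \<open>Rado's theorem for linear matroids\<close>

lemma dim_Un_Int_le:
  fixes X Y :: "'a::euclidean_space set"
  shows "dim (X \<union> Y) + dim (X \<inter> Y) \<le> dim X + dim Y"
proof -
  have "dim (X \<inter> Y) \<le> dim (span X \<inter> span Y)"
    by (rule dim_subset) (auto intro: span_base)
  moreover have "dim {x + y |x y. x \<in> span X \<and> y \<in> span Y} + dim (span X \<inter> span Y) = dim X + dim Y"
    using dim_sums_Int[OF subspace_span subspace_span, of X Y] by (simp add: dim_span)
  ultimately show ?thesis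
    using dim_span[of "X \<union> Y"] span_Un[of X Y] by simp
qed

definition rank_Hall_condition :: "('i::finite \<Rightarrow> 'a::euclidean_space set) \<Rightarrow> bool" where
  "rank_Hall_condition A \<longleftrightarrow> (\<forall>I. card I \<le> dim (\<Union>(A ` I)))"

lemma rank_Hall_condition_delete:
  fixes A :: "'i::finite \<Rightarrow> 'a::euclidean_space set"
  assumes hall: "rank_Hall_condition A" and "x1 \<noteq> x2"
  shows "rank_Hall_condition (A(i := A i - {x1})) \<or> rank_Hall_condition (A(i := A i - {x2}))"
proof (rule ccontr)
  have hall_at: "card I \<le> dim (\<Union>(A ` I))" for I
    using hall unfolding rank_Hall_condition_def by blast
  have deficient_contains_i: "i \<in> I" if "dim (\<Union>((A(i := A i - {x})) ` I)) < card I" for I x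
  proof (rule ccontr)
    assume "i \<notin> I"
    then have "\<Union>((A(i := A i - {x})) ` I) = \<Union>(A ` I)"
      by auto
    with that hall_at[of I] show False
      by simp
  qed
  assume "\<not> ?thesis"
  then obtain I1 I2 where
    I1: "dim (\<Union>((A(i := A i - {x1})) ` I1)) < card I1" and
    I2: "dim (\<Union>((A(i := A i - {x2})) ` I2)) < card I2"
    unfolding rank_Hall_condition_def by (auto simp: not_le)
  have "i \<in> I1" "i \<in> I2"
    using deficient_contains_i[OF I1] deficient_contains_i[OF I2] .
  \<comment> \<open>submodularity of dim: the union and the intersection of the two deficient families
    cannot both satisfy the condition\<close>
  define J1 J2 where "J1 = I1 - {i}" and "J2 = I2 - {i}"
  define X Y where "X = \<Union>(A ` J1) \<union> (A i - {x1})" and "Y = \<Union>(A ` J2) \<union> (A i - {x2})"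
  have "X = \<Union>((A(i := A i - {x1})) ` I1)" "Y = \<Union>((A(i := A i - {x2})) ` I2)"
    using \<open>i \<in> I1\<close> \<open>i \<in> I2\<close> by (auto simp: X_def Y_def J1_def J2_def)
  moreover have "card I1 = card J1 + 1" "card I2 = card J2 + 1"
    using card.remove[of I1 i] card.remove[of I2 i] \<open>i \<in> I1\<close> \<open>i \<in> I2\<close>
    by (simp_all add: J1_def J2_def)
  ultimately have "dim X < card J1 + 1" "dim Y < card J2 + 1"
    using I1 I2 by simp_all
  moreover have "card (insert i (J1 \<union> J2)) \<le> dim (X \<union> Y)"
  proof -
    have "\<Union>(A ` insert i (J1 \<union> J2)) \<subseteq> X \<union> Y"
      using \<open>x1 \<noteq> x2\<close> by (auto simp: X_def Y_def)
    from dim_subset[OF this] hall_at[of "insert i (J1 \<union> J2)"] show ?thesis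
      by linarith
  qed
  moreover have "card (J1 \<inter> J2) \<le> dim (X \<inter> Y)"
  proof -
    have "\<Union>(A ` (J1 \<inter> J2)) \<subseteq> X \<inter> Y"
      by (auto simp: X_def Y_def)
    from dim_subset[OF this] hall_at[of "J1 \<inter> J2"] show ?thesis
      by linarith
  qed
  moreover have "card (insert i (J1 \<union> J2)) + card (J1 \<inter> J2) = card J1 + card J2 + 1"
    using card_Un_Int[of J1 J2] by (simp add: J1_def J2_def)
  ultimately show False
    using dim_Un_Int_le[of X Y] by linarith
qed

lemma sum_card_delete_less:
  fixes A :: "'i::finite \<Rightarrow> 'b set"
  assumes "x \<in> A i" "finite (A i)"
  shows "(\<Sum>j\<in>UNIV. card ((A(i := A i - {x})) j)) < (\<Sum>j\<in>UNIV. card (A j))"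
proof (rule sum_strict_mono_ex1)
  have "card (A i - {x}) < card (A i)"
    using assms by (intro card_Diff1_less)
  then show "\<forall>j\<in>UNIV. card ((A(i := A i - {x})) j) \<le> card (A j)"
    and "\<exists>j\<in>UNIV. card ((A(i := A i - {x})) j) < card (A j)"
    by auto
qed simp

theorem Rado_independent_transversal:
  fixes A :: "'i::finite \<Rightarrow> 'a::euclidean_space set"
  assumes "\<And>i. finite (A i)" and "rank_Hall_condition A"
  shows "\<exists>f. (\<forall>i. f i \<in> A i) \<and> inj f \<and> independent (range f)"
  using assms
proof (induction "\<Sum>i\<in>UNIV. card (A i)" arbitrary: A rule: less_induct)
  case less
  have nonempty: "A i \<noteq> {}" for i
  proof -
    have "card {i} \<le> dim (A i)"
      using less.prems(2)[unfolded rank_Hall_condition_def, rule_format, of "{i}"] by simp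
    then show ?thesis by auto
  qed
  show ?case
  proof (cases "\<forall>i. card (A i) \<le> 1")
    case True
    define f where "f i = the_elem (A i)" for i
    have A: "A i = {f i}" for i
    proof -
      have "card (A i) = 1"
        using True[rule_format, of i] nonempty[of i] less.prems(1)[of i] by (simp add: le_Suc_eq card_0_eq)
      then show ?thesis
        unfolding f_def by (metis is_singleton_altdef is_singleton_the_elem)
    qed
    have "\<Union>(A ` UNIV) = range f"
      using A by auto
    then have "card (UNIV :: 'i set) \<le> dim (range f)"
      using less.prems(2)[unfolded rank_Hall_condition_def, rule_format, of UNIV] by simp
    moreover have "dim (range f) \<le> card (range f)"
      by (rule dim_le_card) (auto intro: span_base)
    moreover have "card (range f) \<le> card (UNIV :: 'i set)"
      by (rule card_image_le) simp
    ultimately have card_eq: "card (range f) = card (UNIV :: 'i set)"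
      and card_le: "card (range f) \<le> dim (range f)"
      by simp_all
    have "inj f"
      using card_eq by (simp add: eq_card_imp_inj_on)
    moreover have "independent (range f)"
      by (rule card_le_dim_spanning[of "range f" "range f"]) (use card_le in \<open>auto intro: span_base\<close>)
    ultimately show ?thesis
      using A by auto
  next
    case False
    then obtain i where "\<not> card (A i) \<le> 1"
      by blast
    then obtain x1 x2 where x: "x1 \<in> A i" "x2 \<in> A i" "x1 \<noteq> x2"
      using card_le_Suc0_iff_eq[OF less.prems(1)] by auto
    from rank_Hall_condition_delete[OF less.prems(2) \<open>x1 \<noteq> x2\<close>]
    obtain x where "x \<in> A i" and hall': "rank_Hall_condition (A(i := A i - {x}))"
      using x by blast
    have "(\<Sum>j\<in>UNIV. card ((A(i := A i - {x})) j)) < (\<Sum>j\<in>UNIV. card (A j))"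
      using \<open>x \<in> A i\<close> less.prems(1) by (rule sum_card_delete_less)
    moreover have "finite ((A(i := A i - {x})) j)" for j
      using less.prems(1) by simp
    ultimately have "\<exists>f. (\<forall>j. f j \<in> (A(i := A i - {x})) j) \<and> inj f \<and> independent (range f)"
      using hall' by (rule less.hyps)
    then obtain f where f: "\<forall>j. f j \<in> (A(i := A i - {x})) j" "inj f" "independent (range f)"
      by blast
    have "(A(i := A i - {x})) j \<subseteq> A j" for j
      by auto
    with f show ?thesis
      by blast
  qed
qed

section \<open>Polynomial functions of the directions\<close>

lemma poly_fun_sum:
  assumes "\<And>x. x \<in> S \<Longrightarrow> poly_fun (f x)"
  shows "poly_fun (\<lambda>d. \<Sum>x\<in>S. f x d)"
  using assms
proof (induction S rule: infinite_finite_induct)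
  case (insert x S)
  then show ?case by (simp add: poly_fun.add)
qed (simp_all add: poly_fun.const)

lemma poly_fun_prod:
  assumes "\<And>x. x \<in> S \<Longrightarrow> poly_fun (f x)"
  shows "poly_fun (\<lambda>d. \<Prod>x\<in>S. f x d)"
  using assms
proof (induction S rule: infinite_finite_induct)
  case (insert x S)
  then show ?case by (simp add: poly_fun.mult)
qed (simp_all add: poly_fun.const)

lemma poly_fun_det:
  fixes M :: "('e \<Rightarrow> real \<times> real) \<Rightarrow> real^'n^'n"
  assumes "\<And>i j. poly_fun (\<lambda>d. M d $ i $ j)"
  shows "poly_fun (\<lambda>d. det (M d))"
  unfolding det_def
  by (intro poly_fun_sum poly_fun.mult poly_fun.const poly_fun_prod assms)

lemma poly_fun_matrix_mult:
  fixes A :: "('e \<Rightarrow> real \<times> real) \<Rightarrow> real^'n^'m" and B :: "('e \<Rightarrow> real \<times> real) \<Rightarrow> real^'k^'n"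
  assumes "\<And>i j. poly_fun (\<lambda>d. A d $ i $ j)" "\<And>i j. poly_fun (\<lambda>d. B d $ i $ j)"
  shows "poly_fun (\<lambda>d. (A d ** B d) $ i $ j)"
  unfolding matrix_matrix_mult_def
  by (simp, intro poly_fun_sum poly_fun.mult assms)

section \<open>The constraint rows of a coloured graph\<close>

definition color_sign :: "bool \<Rightarrow> real" where
  "color_sign g = (if g then -1 else 1)"

text \<open>Coordinate (v, False) is the x-coordinate and (v, True) the y-coordinate of p_v; the
  constraint of an edge e with direction (a, b) is the row a y_row e + b x_row e.\<close>

definition y_row :: "('e \<Rightarrow> 'v::finite) \<Rightarrow> ('e \<Rightarrow> 'v) \<Rightarrow> 'e \<Rightarrow> real^('v \<times> bool)" where
  "y_row src tgt e = axis (tgt e, True) 1 - axis (src e, True) 1"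

definition x_row :: "('e \<Rightarrow> 'v::finite) \<Rightarrow> ('e \<Rightarrow> 'v) \<Rightarrow> ('e \<Rightarrow> bool) \<Rightarrow> 'e \<Rightarrow> real^('v \<times> bool)" where
  "x_row src tgt gam e = axis (src e, False) 1 - color_sign (gam e) *\<^sub>R axis (tgt e, False) 1"

lemma inner_y_row: "y_row src tgt e \<bullet> z = z $ (tgt e, True) - z $ (src e, True)"
  by (simp add: y_row_def inner_diff_left inner_axis')

lemma inner_x_row: "x_row src tgt gam e \<bullet> z = z $ (src e, False) - color_sign (gam e) * z $ (tgt e, False)"
  by (simp add: x_row_def inner_diff_left inner_axis')

lemma walk_orthogonal_y_rows:
  assumes "walk src tgt F u es v" and "\<forall>e\<in>F. y_row src tgt e \<bullet> a = 0"
  shows "a $ (v, True) = a $ (u, True)"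
  using assms by (induction es arbitrary: u) (auto simp: inner_y_row)

lemma walk_orthogonal_x_rows:
  assumes "walk src tgt F u es v" and "\<forall>e\<in>F. x_row src tgt gam e \<bullet> a = 0"
  shows "a $ (v, False) = color_sign (rho_walk gam es) * a $ (u, False)"
  using assms(1)
proof (induction es arbitrary: u)
  case Nil
  then show ?case by (simp add: rho_walk_def color_sign_def)
next
  case (Cons e es)
  then have "e \<in> F" by simp
  then have edge: "a $ (src e, False) = color_sign (gam e) * a $ (tgt e, False)"
    using assms(2) by (simp add: inner_x_row)
  have rho: "color_sign (rho_walk gam (e # es)) = color_sign (gam e) * color_sign (rho_walk gam es)"
    by (simp add: rho_walk_def color_sign_def)
  have sq: "color_sign (gam e) * color_sign (gam e) = 1"
    by (simp add: color_sign_def)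
  from Cons.prems consider "src e = u" "walk src tgt F (tgt e) es v" | "tgt e = u" "walk src tgt F (src e) es v"
    by auto
  then show ?case
  proof cases
    case 1
    then show ?thesis
      using Cons.IH[of "tgt e"] edge rho sq by (simp add: algebra_simps)
  next
    case 2
    then show ?thesis
      using Cons.IH[of "src e"] edge rho by (simp add: algebra_simps)
  qed
qed

lemma orthogonal_edge_rows_eq_0:
  fixes a :: "real^('v::finite \<times> bool)"
  assumes x_rows: "\<forall>e\<in>F. x_row src tgt gam e \<bullet> a = 0"
    and y_rows: "\<forall>e\<in>F. y_row src tgt e \<bullet> a = 0"
    and comps: "\<forall>C\<in>components src tgt UNIV F. \<exists>u\<in>C.
                  a $ (u, True) = 0 \<and> (trivial_rho src tgt gam F C \<longrightarrow> a $ (u, False) = 0)"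
  shows "a = 0"
proof (subst vec_eq_iff, rule allI)
  fix i :: "'v \<times> bool"
  obtain v b where i: "i = (v, b)" by fastforce
  define C where "C = component src tgt UNIV F v"
  have "C \<in> components src tgt UNIV F"
    by (simp add: C_def components_def)
  with comps obtain u where "u \<in> C" and u: "a $ (u, True) = 0"
    and triv: "trivial_rho src tgt gam F C \<Longrightarrow> a $ (u, False) = 0"
    by blast
  then obtain es where "walk src tgt F v es u"
    unfolding C_def component_def by blast
  then have y: "a $ (v, True) = 0"
    using walk_orthogonal_y_rows y_rows u by fastforce
  obtain w es' where w: "walk src tgt F v es' w" and "a $ (w, False) = 0"
  proof (cases "trivial_rho src tgt gam F C")
    case True
    then show ?thesis using that \<open>walk src tgt F v es u\<close> triv by blast
  next
    case False
    then obtain w es'' where "w \<in> C" and odd: "walk src tgt F w es'' w" "rho_walk gam es''"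
      unfolding trivial_rho_def by blast
    have "a $ (w, False) = - a $ (w, False)"
      using walk_orthogonal_x_rows[OF odd(1) x_rows] odd(2) by (simp add: color_sign_def)
    moreover obtain es' where "walk src tgt F v es' w"
      using \<open>w \<in> C\<close> unfolding C_def component_def by blast
    ultimately show ?thesis
      using that by simp
  qed
  have "color_sign (rho_walk gam es') \<noteq> 0"
    by (simp add: color_sign_def)
  then have x: "a $ (v, False) = 0"
    using walk_orthogonal_x_rows[OF w x_rows] \<open>a $ (w, False) = 0\<close> by simp
  show "a $ i = 0 $ i"
    using i x y by (cases b) simp_all
qed

lemma component_self: "u \<in> component src tgt UNIV F u"
  unfolding component_def by (auto intro: exI[of _ "[]"])

lemma span_edge_rows_component_axes:
  fixes src tgt :: "'e \<Rightarrow> 'v::finite" and rep :: "'v set \<Rightarrow> 'v"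
  assumes rep: "\<And>C. C \<in> components src tgt UNIV F \<Longrightarrow> rep C \<in> C"
  shows "span ((\<Union>e\<in>F. {x_row src tgt gam e, y_row src tgt e})
      \<union> ((\<lambda>C. axis (rep C, True) 1) ` components src tgt UNIV F
      \<union> (\<lambda>C. axis (rep C, False) 1) ` {C \<in> components src tgt UNIV F. trivial_rho src tgt gam F C}))
    = UNIV" (is "span ?R = UNIV")
proof (rule ccontr)
  assume "span ?R \<noteq> UNIV"
  then obtain a :: "real^('v \<times> bool)" where "a \<noteq> 0" and a_span: "\<forall>x\<in>span ?R. a \<bullet> x = 0"
    using span_not_UNIV_orthogonal by blast
  have a: "x \<bullet> a = 0" if "x \<in> ?R" for x
  proof -
    have "a \<bullet> x = 0"
      using a_span span_base[OF that] by blast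
    then show ?thesis
      by (simp add: inner_commute)
  qed
  have "a = 0"
  proof (rule orthogonal_edge_rows_eq_0)
    have "x_row src tgt gam e \<in> ?R" "y_row src tgt e \<in> ?R" if "e \<in> F" for e
      using that by blast+
    then show "\<forall>e\<in>F. x_row src tgt gam e \<bullet> a = 0" "\<forall>e\<in>F. y_row src tgt e \<bullet> a = 0"
      using a by simp_all
    show "\<forall>C\<in>components src tgt UNIV F. \<exists>u\<in>C.
        a $ (u, True) = 0 \<and> (trivial_rho src tgt gam F C \<longrightarrow> a $ (u, False) = 0)"
    proof
      fix C assume C: "C \<in> components src tgt UNIV F"
      have "axis (rep C, True) 1 \<in> ?R"
        using C by blast
      from a[OF this] have "a $ (rep C, True) = 0"
        by (simp add: inner_axis')
      moreover have "a $ (rep C, False) = 0" if "trivial_rho src tgt gam F C"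
      proof -
        have "axis (rep C, False) 1 \<in> ?R"
          using C that by blast
        from a[OF this] show ?thesis
          by (simp add: inner_axis')
      qed
      ultimately show "\<exists>u\<in>C. a $ (u, True) = 0 \<and> (trivial_rho src tgt gam F C \<longrightarrow> a $ (u, False) = 0)"
        using rep[OF C] by blast
    qed
  qed
  with \<open>a \<noteq> 0\<close> show False ..
qed

lemma rank_Hall_condition_edge_rows:
  fixes src tgt :: "'e::finite \<Rightarrow> 'v::finite"
  assumes "reflection_22_graph src tgt gam"
  shows "rank_Hall_condition (\<lambda>e. {x_row src tgt gam e, y_row src tgt e})"
  unfolding rank_Hall_condition_def
proof
  fix F :: "'e set"
  define comps where "comps = components src tgt UNIV F"
  define triv where "triv = trivial_rho src tgt gam F"
  define rep :: "'v set \<Rightarrow> 'v" where "rep C = (SOME u. u \<in> C)" for C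
  define S where "S = (\<Union>e\<in>F. {x_row src tgt gam e, y_row src tgt e})"
  define G :: "(real^('v \<times> bool)) set" where
    "G = (\<lambda>C. axis (rep C, True) 1) ` comps \<union> (\<lambda>C. axis (rep C, False) 1) ` {C \<in> comps. triv C}"
  have rep: "rep C \<in> C" if "C \<in> comps" for C
  proof -
    from that obtain u where "C = component src tgt UNIV F u"
      unfolding comps_def components_def by blast
    then have "u \<in> C"
      by (simp add: component_self)
    then show ?thesis
      unfolding rep_def by (rule someI)
  qed
  have "span (S \<union> G) = UNIV"
    unfolding S_def G_def comps_def triv_def
    by (rule span_edge_rows_component_axes) (use rep in \<open>simp add: comps_def\<close>)
  then have "dim (S \<union> G) = dim (UNIV :: (real^('v \<times> bool)) set)"
    by (metis dim_span)
  then have "2 * card (UNIV :: 'v set) = dim (S \<union> G)"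
    by (simp add: card_UNIV_bool)
  also have "\<dots> \<le> dim S + dim G"
    using dim_Un_Int_le[of S G] by linarith
  also have "dim G \<le> card G"
    by (rule dim_le_card) (auto simp: G_def intro: span_base)
  also have "card G \<le> card comps + card {C \<in> comps. triv C}"
    unfolding G_def by (rule card_Un_le[THEN order_trans], intro add_mono card_image_le) simp_all
  finally have "2 * card (UNIV :: 'v set) \<le> dim S + card comps + card {C \<in> comps. triv C}"
    by simp
  moreover have "int (card F) \<le> 2 * int (card (UNIV :: 'v set))
      - int (card {C \<in> comps. \<not> triv C}) - 2 * int (card {C \<in> comps. triv C})"
    using assms unfolding reflection_22_graph_def comps_def triv_def Let_def is_subgraph_def by blast
  moreover have "comps = {C \<in> comps. \<not> triv C} \<union> {C \<in> comps. triv C}"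
    by blast
  then have "card comps = card {C \<in> comps. \<not> triv C} + card {C \<in> comps. triv C}"
    by (metis (no_types, lifting) card_Un_disjoint disjoint_iff finite mem_Collect_eq)
  ultimately show "card F \<le> dim S"
    by linarith
qed

section \<open>Generic invertibility of the realization system\<close>

lemma det_Gram_nonzero_iff:
  fixes A :: "real^'n^'m"
  shows "det (transpose A ** A) \<noteq> 0 \<longleftrightarrow> (\<forall>x. A *v x = 0 \<longrightarrow> x = 0)"
proof -
  have "(transpose A ** A) *v x = 0 \<longleftrightarrow> A *v x = 0" for x
  proof
    assume "(transpose A ** A) *v x = 0"
    then have "x \<bullet> (transpose A *v (A *v x)) = 0" by (simp add: matrix_vector_mul_assoc)
    then have "(A *v x) \<bullet> (A *v x) = 0" by (metis dot_lmul_matrix vector_transpose_matrix)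
    then show "A *v x = 0" by simp
  qed (simp add: matrix_vector_mul_assoc[symmetric])
  then show ?thesis
    by (simp add: invertible_det_nz[symmetric] invertible_left_inverse matrix_left_invertible_ker)
qed

text \<open>The row None pins the y-coordinate of v0. The matrix has m + 1 = 2n rows, but as they are
  indexed by 'e option rather than by 'v \<times> bool, the Gram determinant det (transpose M ** M) plays
  the role of det M.\<close>

definition network_matrix ::
  "('e::finite \<Rightarrow> 'v::finite) \<Rightarrow> ('e \<Rightarrow> 'v) \<Rightarrow> ('e \<Rightarrow> bool) \<Rightarrow> 'v \<Rightarrow> ('e \<Rightarrow> real \<times> real)
     \<Rightarrow> real^('v \<times> bool)^('e option)" where
  "network_matrix src tgt gam v0 d = (\<chi> k. case k of
      None \<Rightarrow> axis (v0, True) 1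
    | Some e \<Rightarrow> fst (d e) *\<^sub>R y_row src tgt e + snd (d e) *\<^sub>R x_row src tgt gam e)"

definition placement_coords :: "'v::finite \<Rightarrow> ('v \<Rightarrow> real \<times> real) \<Rightarrow> real^('v \<times> bool)" where
  "placement_coords v0 p = (\<chi> i. if snd i then snd (p (fst i)) - snd (p v0) else fst (p (fst i)))"

lemma poly_fun_det_network_Gram:
  "poly_fun (\<lambda>d. det (transpose (network_matrix src tgt gam v0 d) ** network_matrix src tgt gam v0 d))"
proof -
  have entries: "poly_fun (\<lambda>d. network_matrix src tgt gam v0 d $ k $ i)" for k i
    by (cases k) (simp_all add: network_matrix_def poly_fun.const, intro poly_fun.intros)
  show ?thesis
    by (intro poly_fun_det poly_fun_matrix_mult) (simp_all add: transpose_def entries)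
qed

lemma realization_in_kernel:
  assumes "is_realization src tgt gam d p"
  shows "network_matrix src tgt gam v0 d *v placement_coords v0 p = 0"
proof (subst vec_eq_iff, rule allI)
  fix k
  show "(network_matrix src tgt gam v0 d *v placement_coords v0 p) $ k = 0 $ k"
  proof (cases k)
    case None
    then show ?thesis
      by (simp add: matrix_vector_mul_component network_matrix_def placement_coords_def inner_axis')
  next
    case (Some e)
    have "(fst (d e) *\<^sub>R y_row src tgt e + snd (d e) *\<^sub>R x_row src tgt gam e) \<bullet> placement_coords v0 p
        = (Phi (gam e) (p (tgt e)) - p (src e)) \<bullet> perp (d e)"
      by (simp add: inner_add_left inner_y_row inner_x_row placement_coords_def color_sign_def
          Phi_def perp_def inner_prod_def algebra_simps)
    with assms Some show ?thesis
      by (simp add: matrix_vector_mul_component network_matrix_def is_realization_def)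
  qed
qed

lemma placement_coords_eq_0_imp_collapsed:
  assumes "placement_coords v0 p = 0"
  shows "collapsed p"
proof -
  have "placement_coords v0 p $ (v, False) = 0" "placement_coords v0 p $ (v, True) = 0" for v
    using assms by simp_all
  then have "p v = (0, snd (p v0))" for v
    by (simp add: placement_coords_def prod_eq_iff)
  then obtain c where "\<And>v. p v = (0, c)"
    by blast
  then show ?thesis
    by (auto simp: collapsed_def lift_placement_def Phi_def)
qed

lemma pin_row_notin_span_edge_rows:
  fixes g :: "'e \<Rightarrow> real^('v::finite \<times> bool)"
  assumes "\<forall>e. g e \<in> {x_row src tgt gam e, y_row src tgt e}"
  shows "axis (v0, True) 1 \<notin> span (range g)"
proof
  define u :: "real^('v \<times> bool)" where "u = (\<chi> i. if snd i then 1 else 0)"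
  \<comment> \<open>u is the vertical translation, which satisfies every edge constraint\<close>
  assume "axis (v0, True) 1 \<in> span (range g)"
  moreover have "orthogonal u y" if "y \<in> range g" for y
  proof -
    from that assms have "y \<in> range (x_row src tgt gam) \<union> range (y_row src tgt)"
      by blast
    then have "y \<bullet> u = 0"
      by (auto simp: inner_x_row inner_y_row u_def)
    then show ?thesis
      by (simp add: orthogonal_def inner_commute)
  qed
  ultimately have "orthogonal u (axis (v0, True) 1)"
    by (rule orthogonal_to_span)
  then show False
    by (simp add: orthogonal_def u_def inner_axis)
qed

lemma span_pin_row_edge_transversal:
  fixes src tgt :: "'e::finite \<Rightarrow> 'v::finite"
  assumes "reflection_22_graph src tgt gam"
    and g: "\<forall>e. g e \<in> {x_row src tgt gam e, y_row src tgt e}" "inj g" "independent (range g)"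
  shows "span (insert (axis (v0, True) 1) (range g)) = UNIV"
proof -
  let ?R = "insert (axis (v0, True) 1) (range g)"
  have "independent ?R"
    by (rule independent_insertI[OF pin_row_notin_span_edge_rows[OF g(1)] g(3)])
  moreover have "card ?R = CARD('v \<times> bool)"
  proof -
    have "axis (v0, True) 1 \<notin> range g"
      using pin_row_notin_span_edge_rows[OF g(1)] span_base by blast
    then have "card ?R = CARD('e) + 1"
      using card_image[OF g(2)] by simp
    with assms(1) show ?thesis
      by (simp add: reflection_22_graph_def card_UNIV_bool)
  qed
  ultimately show ?thesis
    using card_ge_dim_independent[of ?R UNIV] by auto
qed

lemma network_matrix_injective_for_some_directions:
  fixes src tgt :: "'e::finite \<Rightarrow> 'v::finite"
  assumes "reflection_22_graph src tgt gam"
  shows "\<exists>d. \<forall>z. network_matrix src tgt gam v0 d *v z = 0 \<longrightarrow> z = 0"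
proof -
  obtain g where g: "\<forall>e. g e \<in> {x_row src tgt gam e, y_row src tgt e}" "inj g" "independent (range g)"
    using Rado_independent_transversal[OF _ rank_Hall_condition_edge_rows[OF assms]] by auto
  define d :: "'e \<Rightarrow> real \<times> real" where
    "d e = (if g e = y_row src tgt e then (1, 0) else (0, 1))" for e
  define R where "R = insert (axis (v0, True) 1) (range g)"
  have rows: "\<exists>k. network_matrix src tgt gam v0 d $ k = r" if "r \<in> R" for r
  proof (cases "r \<in> range g")
    case True
    then obtain e where "r = g e" by blast
    then have "network_matrix src tgt gam v0 d $ Some e = r"
      using g(1)[rule_format, of e] by (auto simp: network_matrix_def d_def)
    then show ?thesis ..
  next
    case False
    with that have "network_matrix src tgt gam v0 d $ None = r"
      by (simp add: R_def network_matrix_def)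
    then show ?thesis ..
  qed
  show ?thesis
  proof (intro exI allI impI)
    fix z
    assume "network_matrix src tgt gam v0 d *v z = 0"
    then have "network_matrix src tgt gam v0 d $ k \<bullet> z = 0" for k
      by (metis matrix_vector_mul_component zero_index)
    then have "orthogonal z r" if "r \<in> R" for r
      using rows[OF that] by (auto simp: orthogonal_def inner_commute)
    then have "orthogonal z z"
      using orthogonal_to_span span_pin_row_edge_transversal[OF assms g] unfolding R_def by blast
    then show "z = 0"
      by (simp add: orthogonal_self)
  qed
qed

theorem proposition8:
  fixes src :: "'e::finite \<Rightarrow> 'v::finite" and tgt :: "'e \<Rightarrow> 'v" and gam :: "'e \<Rightarrow> bool"
  assumes "reflection_22_graph src tgt gam"
  shows "generic (\<lambda>d. \<forall>p. is_realization src tgt gam d p \<longrightarrow> collapsed p)"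
proof -
  let ?M = "network_matrix src tgt gam undefined"
  obtain d0 where "\<forall>z. ?M d0 *v z = 0 \<longrightarrow> z = 0"
    using network_matrix_injective_for_some_directions[OF assms] by blast
  then have "det (transpose (?M d0) ** ?M d0) \<noteq> 0"
    by (simp add: det_Gram_nonzero_iff)
  moreover have "collapsed p"
    if "det (transpose (?M d) ** ?M d) \<noteq> 0" and "is_realization src tgt gam d p" for d p
    using that det_Gram_nonzero_iff realization_in_kernel placement_coords_eq_0_imp_collapsed by metis
  ultimately show ?thesis
    unfolding generic_def using poly_fun_det_network_Gram by blast
qed

end
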